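(* For every $u\in R$ and every $v\in Z(R)$, one has $u^\eta v^\eta=(uv)^\eta$.
   Context: Let $f\in\mathbb{C}[H]$ be a polynomial. $R=R(f)$ is the associative $\mathbb{C}$-algebra generated by $E,F,H$ with relations $EF-FE=f(H)$, $HE-EH=E$, $HF-FH=-F$; the monomials $F^iH^jE^k$ form a basis of $R$. $Z(R)$ is the center of $R$. Let $R(E)=\mathbb{C}[E]$ and $R(F,H)$ the subalgebra generated by $F,H$. Fix an algebra homomorphism $\eta:R(E)\to\mathbb{C}$ with $\eta(E)\neq0$ and let $R_\eta(E)=\ker\eta$. Then $R=R(F,H)\oplus R\,R_\eta(E)$ as vector spaces; for $u\in R$, $u^\eta$ denotes its $R(F,H)$-component. *)

theory Defs
  imports "HOL-Computational_Algebra.Polynomial"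
begin

text \<open>A complex algebra is modelled as a ring 'a together with a ring homomorphism
  c from the complex numbers into the centre of 'a (scalar multiplication z.u = c z * u).\<close>

definition central_emb :: "(complex \<Rightarrow> 'a::ring_1) \<Rightarrow> bool" where
  "central_emb c \<longleftrightarrow> (\<forall>x y. c (x + y) = c x + c y) \<and> (\<forall>x y. c (x * y) = c x * c y)
     \<and> c 1 = 1 \<and> (\<forall>z u. c z * u = u * c z)"

definition poly_eval_alg :: "(complex \<Rightarrow> 'a::ring_1) \<Rightarrow> complex poly \<Rightarrow> 'a \<Rightarrow> 'a" where
  "poly_eval_alg c p x = (\<Sum>n\<le>degree p. c (coeff p n) * x ^ n)"

definition pbw_sum :: "(complex \<Rightarrow> 'a::ring_1) \<Rightarrow> 'a \<Rightarrow> 'a \<Rightarrow> 'a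
     \<Rightarrow> (nat \<times> nat \<times> nat \<Rightarrow> complex) \<Rightarrow> 'a" where
  "pbw_sum c E F H a = (\<Sum>m\<in>{m. a m \<noteq> 0}.
      (case m of (i, j, k) \<Rightarrow> c (a m) * F ^ i * H ^ j * E ^ k))"

definition pbw_basis :: "(complex \<Rightarrow> 'a::ring_1) \<Rightarrow> 'a \<Rightarrow> 'a \<Rightarrow> 'a \<Rightarrow> bool" where
  "pbw_basis c E F H \<longleftrightarrow>
     (\<forall>u. \<exists>!a. finite {m. a m \<noteq> 0} \<and> u = pbw_sum c E F H a)"

text \<open>('a, c) together with E, F, H is (a copy of) the algebra R(f): the relations hold and
  the PBW monomials form a basis (this determines R(f) up to isomorphism).\<close>
definition is_R_algebra :: "(complex \<Rightarrow> 'a::ring_1) \<Rightarrow> complex poly \<Rightarrow> 'a \<Rightarrow> 'a \<Rightarrow> 'a \<Rightarrow> bool" where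
  "is_R_algebra c f E F H \<longleftrightarrow> central_emb c
     \<and> E * F - F * E = poly_eval_alg c f H
     \<and> H * E - E * H = E
     \<and> H * F - F * H = - F
     \<and> pbw_basis c E F H"

inductive_set gen_subalg :: "(complex \<Rightarrow> 'a::ring_1) \<Rightarrow> 'a set \<Rightarrow> 'a set"
  for c :: "complex \<Rightarrow> 'a" and S :: "'a set" where
  scal: "c z \<in> gen_subalg c S"
| gen: "s \<in> S \<Longrightarrow> s \<in> gen_subalg c S"
| add: "x \<in> gen_subalg c S \<Longrightarrow> y \<in> gen_subalg c S \<Longrightarrow> x + y \<in> gen_subalg c S"
| mult: "x \<in> gen_subalg c S \<Longrightarrow> y \<in> gen_subalg c S \<Longrightarrow> x * y \<in> gen_subalg c S"

definition alg_hom_on :: "(complex \<Rightarrow> 'a::ring_1) \<Rightarrow> 'a set \<Rightarrow> ('a \<Rightarrow> complex) \<Rightarrow> bool" where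
  "alg_hom_on c A \<eta> \<longleftrightarrow> (\<forall>x\<in>A. \<forall>y\<in>A. \<eta> (x + y) = \<eta> x + \<eta> y \<and> \<eta> (x * y) = \<eta> x * \<eta> y)
     \<and> (\<forall>z. \<eta> (c z) = z)"

inductive_set left_mult_span :: "'a::ring_1 set \<Rightarrow> 'a set" for K :: "'a set" where
  zero: "0 \<in> left_mult_span K"
| prod: "s \<in> K \<Longrightarrow> r * s \<in> left_mult_span K"
| add: "x \<in> left_mult_span K \<Longrightarrow> y \<in> left_mult_span K \<Longrightarrow> x + y \<in> left_mult_span K"

definition eta_ker :: "(complex \<Rightarrow> 'a::ring_1) \<Rightarrow> 'a \<Rightarrow> ('a \<Rightarrow> complex) \<Rightarrow> 'a set" where
  "eta_ker c E \<eta> = {x \<in> gen_subalg c {E}. \<eta> x = 0}"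

text \<open>u^eta: the R(F,H)-component of u in R = R(F,H) (+) R R_eta(E).\<close>
definition eta_comp :: "(complex \<Rightarrow> 'a::ring_1) \<Rightarrow> 'a \<Rightarrow> 'a \<Rightarrow> 'a \<Rightarrow> ('a \<Rightarrow> complex) \<Rightarrow> 'a \<Rightarrow> 'a" where
  "eta_comp c E F H \<eta> u =
     (THE x. x \<in> gen_subalg c {F, H} \<and> u - x \<in> left_mult_span (eta_ker c E \<eta>))"

definition ring_center :: "'a::ring_1 set" where
  "ring_center = {v. \<forall>u. u * v = v * u}"

end

theory Submission
  imports Defs
begin

text \<open>The component \<open>u\<^sup>\<eta>\<close> is computed by the linear map \<open>\<pi>\<close> sending the PBW monomial
  \<open>F\<^sup>i H\<^sup>j E\<^sup>k\<close> to \<open>\<eta>(E)\<^sup>k F\<^sup>i H\<^sup>j\<close>. Because \<open>[H, F\<^sup>i] = -i F\<^sup>i\<close>, \<open>\<pi>\<close> is left \<open>R(F,H)\<close>-linear, and it satisfies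
  \<open>\<pi>(u t) = \<pi>(u) \<eta>(t)\<close> for \<open>t \<in> \<complex>[E]\<close>; so it fixes \<open>R(F,H)\<close>, kills \<open>R R\<^sub>\<eta>(E)\<close>, and \<open>u - \<pi>(u) \<in> R R\<^sub>\<eta>(E)\<close>.
  Hence the decomposition exists, is unique, and \<open>u\<^sup>\<eta> = \<pi>(u)\<close>. For central \<open>v\<close> the identity
  \<open>u v - u\<^sup>\<eta> v\<^sup>\<eta> = v (u - u\<^sup>\<eta>) + u\<^sup>\<eta> (v - v\<^sup>\<eta>)\<close> exhibits \<open>u v - u\<^sup>\<eta> v\<^sup>\<eta>\<close> in the left ideal
  \<open>R R\<^sub>\<eta>(E)\<close>, while \<open>u\<^sup>\<eta> v\<^sup>\<eta> \<in> R(F,H)\<close>.\<close>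

lemma commutator_eq_neg_power:
  fixes x y :: "'a::ring_1"
  assumes "x * y - y * x = - y"
  shows "x * y ^ n = y ^ n * x - of_nat n * y ^ n"
proof (induction n)
  case 0
  then show ?case by simp
next
  case (Suc n)
  have xy: "x * y = y * x - y" using assms by (simp add: algebra_simps eq_neg_iff_add_eq_0)
  have "x * y ^ Suc n = (x * y ^ n) * y" by (simp add: power_commutes mult.assoc)
  also have "\<dots> = y ^ n * (x * y) - of_nat n * y ^ Suc n"
    by (simp add: Suc algebra_simps power_commutes)
  also have "\<dots> = y ^ Suc n * x - of_nat (Suc n) * y ^ Suc n"
    by (simp add: xy algebra_simps power_commutes) (metis mult.assoc power_commutes)
  finally show ?case .
qed

lemma left_mult_span_mult_left:
  "y \<in> left_mult_span K \<Longrightarrow> r * y \<in> left_mult_span K"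
proof (induction arbitrary: r rule: left_mult_span.induct)
  case zero
  then show ?case by (simp add: left_mult_span.zero)
next
  case (prod s r')
  then show ?case using left_mult_span.prod[of s K "r * r'"] by (simp add: mult.assoc)
next
  case (add x y)
  then show ?case by (simp add: distrib_left left_mult_span.add)
qed

lemma left_mult_span_sum:
  "(\<And>i. i \<in> I \<Longrightarrow> g i \<in> left_mult_span K) \<Longrightarrow> (\<Sum>i\<in>I. g i) \<in> left_mult_span K"
  by (induction I rule: infinite_finite_induct) (auto intro: left_mult_span.intros)

locale complex_algebra =
  fixes c :: "complex \<Rightarrow> 'a::ring_1"
  assumes central_emb: "central_emb c"
begin

lemma c_add: "c (x + y) = c x + c y"
  using central_emb unfolding central_emb_def by blast

lemma c_mult: "c (x * y) = c x * c y"
  using central_emb unfolding central_emb_def by blast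

lemma c_one: "c 1 = 1"
  using central_emb unfolding central_emb_def by blast

lemma c_commute: "c z * u = u * c z"
  using central_emb unfolding central_emb_def by blast

lemma c_zero: "c 0 = 0"
  using c_add[of 0 0] by simp

lemma c_minus: "c (- z) = - c z"
  using c_add[of z "- z"] by (simp add: c_zero eq_neg_iff_add_eq_0 add.commute)

lemma c_of_nat: "c (of_nat n) = of_nat n"
  by (induction n) (simp_all add: c_zero c_add c_one)

lemma gen_subalg_zero: "0 \<in> gen_subalg c S"
  using gen_subalg.scal[of c 0 S] by (simp add: c_zero)

lemma gen_subalg_power: "s \<in> gen_subalg c S \<Longrightarrow> s ^ n \<in> gen_subalg c S"
  using gen_subalg.scal[of c 1 S] by (induction n) (simp_all add: c_one gen_subalg.mult)

lemma gen_subalg_sum: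
  "(\<And>i. i \<in> I \<Longrightarrow> g i \<in> gen_subalg c S) \<Longrightarrow> (\<Sum>i\<in>I. g i) \<in> gen_subalg c S"
  by (induction I rule: infinite_finite_induct) (auto intro: gen_subalg_zero gen_subalg.add)

end

locale pbw_algebra = complex_algebra c for c :: "complex \<Rightarrow> 'a::ring_1" +
  fixes E F H :: 'a
  assumes pbw_basis: "pbw_basis c E F H"
begin

definition monom :: "complex \<Rightarrow> nat \<times> nat \<times> nat \<Rightarrow> 'a" where
  "monom z = (\<lambda>(i, j, k). c z * F ^ i * H ^ j * E ^ k)"

lemma monom_simp: "monom z (i, j, k) = c z * F ^ i * H ^ j * E ^ k"
  by (simp add: monom_def)

lemma monom_zero: "monom 0 m = 0"
  by (simp add: monom_def c_zero split: prod.split)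

lemma monom_add: "monom (x + y) m = monom x m + monom y m"
  by (simp add: monom_def c_add algebra_simps split: prod.split)

lemma c_mult_monom: "c w * monom z m = monom (w * z) m"
  by (simp add: monom_def c_mult mult.assoc split: prod.split)

lemma monom_mult_c: "monom z m * c w = monom (z * w) m"
  by (simp add: c_mult_monom[symmetric] c_commute mult.commute)

lemma monom_mult_E: "monom z (i, j, k) * E = monom z (i, j, Suc k)"
  by (simp add: monom_simp mult.assoc power_commutes)

lemma F_mult_monom: "F * monom z (i, j, k) = monom z (Suc i, j, k)"
proof -
  have "F * monom z (i, j, k) = (F * c z) * (F ^ i * H ^ j * E ^ k)"
    by (simp add: monom_simp mult.assoc)
  also have "\<dots> = c z * (F * F ^ i) * H ^ j * E ^ k"
    by (metis c_commute mult.assoc)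
  finally show ?thesis by (simp add: monom_simp)
qed

lemma pbw_sum_eq: "pbw_sum c E F H a = (\<Sum>m | a m \<noteq> 0. monom (a m) m)"
  unfolding pbw_sum_def monom_def by (rule sum.cong) (auto split: prod.splits)

definition coef :: "'a \<Rightarrow> nat \<times> nat \<times> nat \<Rightarrow> complex" where
  "coef u = (THE a. finite {m. a m \<noteq> 0} \<and> u = pbw_sum c E F H a)"

lemma coef_unique_ex: "\<exists>!a. finite {m. a m \<noteq> 0} \<and> u = pbw_sum c E F H a"
  using pbw_basis unfolding pbw_basis_def by blast

lemma coef_finite: "finite {m. coef u m \<noteq> 0}"
  and pbw_sum_coef: "pbw_sum c E F H (coef u) = u"
  using theI'[OF coef_unique_ex[of u]] unfolding coef_def by auto

lemma coef_pbw_sum: "finite {m. a m \<noteq> 0} \<Longrightarrow> coef (pbw_sum c E F H a) = a"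
  unfolding coef_def by (rule the1_equality[OF coef_unique_ex]) simp

lemma sum_monom_coef: "(\<Sum>m | coef u m \<noteq> 0. monom (coef u m) m) = u"
  using pbw_sum_coef[of u] by (simp add: pbw_sum_eq)

lemma sum_monom_coef_superset:
  assumes "finite S" "{m. coef u m \<noteq> 0} \<subseteq> S"
  shows "(\<Sum>m\<in>S. monom (coef u m) m) = u"
proof -
  have "(\<Sum>m\<in>S. monom (coef u m) m) = (\<Sum>m | coef u m \<noteq> 0. monom (coef u m) m)"
    using assms by (intro sum.mono_neutral_right) (auto simp: monom_zero)
  then show ?thesis by (simp only: sum_monom_coef)
qed

definition lin_ext :: "(nat \<times> nat \<times> nat \<Rightarrow> 'a) \<Rightarrow> 'a \<Rightarrow> 'a" where
  "lin_ext \<phi> u = (\<Sum>m | coef u m \<noteq> 0. c (coef u m) * \<phi> m)"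

lemma lin_ext_sum_monom:
  assumes "finite S"
  shows "lin_ext \<phi> (\<Sum>m\<in>S. monom (a m) m) = (\<Sum>m\<in>S. c (a m) * \<phi> m)"
proof -
  define a' where "a' m = (if m \<in> S then a m else 0)" for m
  have supp: "{m. a' m \<noteq> 0} \<subseteq> S" by (auto simp: a'_def)
  then have fin: "finite {m. a' m \<noteq> 0}" using assms finite_subset by blast
  have "(\<Sum>m\<in>S. monom (a m) m) = (\<Sum>m\<in>S. monom (a' m) m)"
    by (simp add: a'_def)
  also have "\<dots> = pbw_sum c E F H a'"
    unfolding pbw_sum_eq using assms supp
    by (intro sum.mono_neutral_right) (auto simp: monom_zero)
  finally have "lin_ext \<phi> (\<Sum>m\<in>S. monom (a m) m) = (\<Sum>m | a' m \<noteq> 0. c (a' m) * \<phi> m)"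
    by (simp add: lin_ext_def coef_pbw_sum[OF fin])
  also have "\<dots> = (\<Sum>m\<in>S. c (a' m) * \<phi> m)"
    using assms supp by (intro sum.mono_neutral_left) (auto simp: c_zero)
  also have "\<dots> = (\<Sum>m\<in>S. c (a m) * \<phi> m)"
    by (simp add: a'_def)
  finally show ?thesis .
qed

lemma lin_ext_monom: "lin_ext \<phi> (monom z m) = c z * \<phi> m"
  using lin_ext_sum_monom[of "{m}" \<phi> "\<lambda>_. z"] by simp

lemma lin_ext_add: "lin_ext \<phi> (x + y) = lin_ext \<phi> x + lin_ext \<phi> y"
proof -
  define S where "S = {m. coef x m \<noteq> 0} \<union> {m. coef y m \<noteq> 0}"
  have S: "finite S" "{m. coef x m \<noteq> 0} \<subseteq> S" "{m. coef y m \<noteq> 0} \<subseteq> S"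
    using coef_finite by (auto simp: S_def)
  let ?x = "\<Sum>m\<in>S. monom (coef x m) m" and ?y = "\<Sum>m\<in>S. monom (coef y m) m"
  have "lin_ext \<phi> (?x + ?y) = lin_ext \<phi> (\<Sum>m\<in>S. monom (coef x m + coef y m) m)"
    by (simp add: monom_add sum.distrib)
  also have "\<dots> = lin_ext \<phi> ?x + lin_ext \<phi> ?y"
    by (simp add: lin_ext_sum_monom S(1) c_add distrib_right sum.distrib)
  finally show ?thesis
    by (simp only: sum_monom_coef_superset[OF S(1,2)] sum_monom_coef_superset[OF S(1,3)])
qed

lemma lin_ext_sum: "lin_ext \<phi> (\<Sum>i\<in>I. g i) = (\<Sum>i\<in>I. lin_ext \<phi> (g i))"
proof (induction I rule: infinite_finite_induct)
  case (infinite I)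
  then show ?case using lin_ext_sum_monom[of "{}"] by simp
next
  case empty
  then show ?case using lin_ext_sum_monom[of "{}"] by simp
next
  case (insert i I)
  then show ?case by (simp add: lin_ext_add)
qed

lemma lin_ext_mult_right:
  assumes "\<And>z m. lin_ext \<phi> (monom z m * t) = lin_ext \<phi> (monom z m) * s"
  shows "lin_ext \<phi> (u * t) = lin_ext \<phi> u * s"
proof -
  have "lin_ext \<phi> ((\<Sum>m | coef u m \<noteq> 0. monom (coef u m) m) * t)
      = (\<Sum>m | coef u m \<noteq> 0. lin_ext \<phi> (monom (coef u m) m)) * s"
    by (simp add: sum_distrib_right lin_ext_sum assms)
  then show ?thesis
    by (simp only: sum_monom_coef lin_ext_sum[symmetric])
qed

lemma lin_ext_mult_left:
  assumes "\<And>z m. lin_ext \<phi> (t * monom z m) = s * lin_ext \<phi> (monom z m)"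
  shows "lin_ext \<phi> (t * u) = s * lin_ext \<phi> u"
proof -
  have "lin_ext \<phi> (t * (\<Sum>m | coef u m \<noteq> 0. monom (coef u m) m))
      = s * (\<Sum>m | coef u m \<noteq> 0. lin_ext \<phi> (monom (coef u m) m))"
    by (simp add: sum_distrib_left lin_ext_sum assms)
  then show ?thesis
    by (simp only: sum_monom_coef lin_ext_sum[symmetric])
qed

end

locale pbw_character = pbw_algebra c E F H for c :: "complex \<Rightarrow> 'a::ring_1" and E F H +
  fixes \<eta> :: "'a \<Rightarrow> complex"
  assumes commutator_HF: "H * F - F * H = - F"
    and character: "alg_hom_on c (gen_subalg c {E}) \<eta>"
begin

abbreviation (input) "R_FH \<equiv> gen_subalg c {F, H}"
abbreviation (input) "R_E \<equiv> gen_subalg c {E}"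
abbreviation (input) "ker_ideal \<equiv> left_mult_span (eta_ker c E \<eta>)"

lemma eta_c: "\<eta> (c z) = z"
  using character unfolding alg_hom_on_def by blast

lemma eta_add: "x \<in> R_E \<Longrightarrow> y \<in> R_E \<Longrightarrow> \<eta> (x + y) = \<eta> x + \<eta> y"
  using character unfolding alg_hom_on_def by blast

lemma eta_mult: "x \<in> R_E \<Longrightarrow> y \<in> R_E \<Longrightarrow> \<eta> (x * y) = \<eta> x * \<eta> y"
  using character unfolding alg_hom_on_def by blast

lemma E_in_R_E: "E \<in> R_E"
  by (simp add: gen_subalg.gen)

lemma eta_power: "\<eta> (E ^ k) = \<eta> E ^ k"
  using eta_c[of 1] by (induction k) (simp_all add: c_one eta_mult E_in_R_E gen_subalg_power)

lemma H_mult_FH: "H * (c z * F ^ i * H ^ j) = c z * F ^ i * H ^ Suc j - c (z * of_nat i) * F ^ i * H ^ j"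
proof -
  have "H * (c z * F ^ i * H ^ j) = c z * (H * F ^ i) * H ^ j"
    by (metis c_commute mult.assoc)
  also have "\<dots> = c z * (F ^ i * H - of_nat i * F ^ i) * H ^ j"
    by (simp add: commutator_eq_neg_power[OF commutator_HF])
  also have "\<dots> = c z * F ^ i * H ^ Suc j - c (z * of_nat i) * F ^ i * H ^ j"
    by (simp add: c_mult c_of_nat algebra_simps power_commutes)
  finally show ?thesis .
qed

lemma H_mult_monom: "H * monom z (i, j, k) = monom z (i, Suc j, k) - monom (z * of_nat i) (i, j, k)"
  using arg_cong[where f = "\<lambda>x. x * E ^ k", OF H_mult_FH[of z i j]]
  by (simp add: monom_simp mult.assoc left_diff_distrib)

definition proj :: "'a \<Rightarrow> 'a" where
  "proj = lin_ext (\<lambda>(i, j, k). c (\<eta> E ^ k) * F ^ i * H ^ j)"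

lemma proj_monom: "proj (monom z (i, j, k)) = c (z * \<eta> E ^ k) * F ^ i * H ^ j"
  by (simp add: proj_def lin_ext_monom c_mult mult.assoc)

lemma proj_add: "proj (x + y) = proj x + proj y"
  by (simp add: proj_def lin_ext_add)

lemma proj_monom_mult_c: "proj (monom z m * c w) = proj (monom z m) * c w"
proof -
  obtain i j k where m: "m = (i, j, k)" by (cases m)
  have "proj (monom z m) * c w = c w * proj (monom z m)"
    by (rule c_commute[symmetric])
  also have "\<dots> = c (w * (z * \<eta> E ^ k)) * F ^ i * H ^ j"
    by (simp add: m proj_monom c_mult mult.assoc)
  also have "\<dots> = proj (monom z m * c w)"
    by (simp add: m monom_mult_c proj_monom ac_simps)
  finally show ?thesis ..
qed

lemma proj_monom_mult_E: "proj (monom z m * E) = proj (monom z m) * c (\<eta> E)"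
proof -
  obtain i j k where m: "m = (i, j, k)" by (cases m)
  have "proj (monom z m) * c (\<eta> E) = c (\<eta> E) * proj (monom z m)"
    by (rule c_commute[symmetric])
  also have "\<dots> = c (\<eta> E * (z * \<eta> E ^ k)) * F ^ i * H ^ j"
    by (simp add: m proj_monom c_mult mult.assoc)
  also have "\<dots> = proj (monom z m * E)"
    by (simp add: m monom_mult_E proj_monom ac_simps)
  finally show ?thesis ..
qed

lemma proj_mult_R_E: "t \<in> R_E \<Longrightarrow> proj (u * t) = proj u * c (\<eta> t)"
proof (induction arbitrary: u rule: gen_subalg.induct)
  case (scal z)
  show ?case unfolding eta_c proj_def
    by (rule lin_ext_mult_right) (rule proj_monom_mult_c[unfolded proj_def])
next
  case (gen s)
  then have "s = E" by simp
  then show ?case unfolding proj_def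
    by (simp add: lin_ext_mult_right proj_monom_mult_E[unfolded proj_def])
next
  case (add x y)
  then show ?case by (simp add: distrib_left distrib_right proj_add eta_add c_add)
next
  case (mult x y)
  then show ?case by (simp add: mult.assoc[symmetric] eta_mult c_mult)
qed

lemma proj_diff: "proj (x - y) = proj x - proj y"
  using proj_add[of "x - y" y] by simp

lemma proj_sum: "proj (\<Sum>i\<in>I. g i) = (\<Sum>i\<in>I. proj (g i))"
  by (simp add: proj_def lin_ext_sum)

lemma proj_ker_ideal: "y \<in> ker_ideal \<Longrightarrow> proj y = 0"
proof (induction rule: left_mult_span.induct)
  case zero
  then show ?case using proj_sum[of _ "{}"] by simp
next
  case (prod s r)
  then show ?case by (simp add: eta_ker_def proj_mult_R_E c_zero)
next
  case (add x y)
  then show ?case by (simp add: proj_add)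
qed

lemma proj_c_mult_monom: "proj (c w * monom z m) = c w * proj (monom z m)"
  by (cases m) (simp add: c_mult_monom proj_monom c_mult mult.assoc)

lemma proj_F_mult_monom: "proj (F * monom z m) = F * proj (monom z m)"
proof -
  obtain i j k where m: "m = (i, j, k)" by (cases m)
  have "F * proj (monom z m) = (F * c (z * \<eta> E ^ k)) * F ^ i * H ^ j"
    by (simp add: m proj_monom mult.assoc)
  also have "\<dots> = c (z * \<eta> E ^ k) * (F * F ^ i) * H ^ j"
    by (simp add: c_commute mult.assoc)
  also have "\<dots> = proj (F * monom z m)"
    by (simp add: m F_mult_monom proj_monom)
  finally show ?thesis ..
qed

lemma proj_H_mult_monom: "proj (H * monom z m) = H * proj (monom z m)"
proof -
  obtain i j k where m: "m = (i, j, k)" by (cases m)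
  have "proj (H * monom z m) = proj (monom z (i, Suc j, k)) - proj (monom (z * of_nat i) (i, j, k))"
    by (simp add: m H_mult_monom proj_diff)
  also have "\<dots> = c (z * \<eta> E ^ k) * F ^ i * H ^ Suc j - c (z * \<eta> E ^ k * of_nat i) * F ^ i * H ^ j"
    by (simp add: proj_monom mult_ac)
  also have "\<dots> = H * proj (monom z m)"
    by (simp add: m proj_monom H_mult_FH)
  finally show ?thesis .
qed

lemma proj_mult_R_FH: "y \<in> R_FH \<Longrightarrow> proj (y * u) = y * proj u"
proof (induction arbitrary: u rule: gen_subalg.induct)
  case (scal z)
  show ?case unfolding proj_def
    by (rule lin_ext_mult_left) (rule proj_c_mult_monom[unfolded proj_def])
next
  case (gen s)
  then consider "s = F" | "s = H" by blast
  then show ?case unfolding proj_def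
    by cases (rule lin_ext_mult_left, simp add: proj_F_mult_monom proj_H_mult_monom
        flip: proj_def)+
next
  case (add x y)
  then show ?case by (simp add: distrib_right proj_add)
next
  case (mult x y)
  then show ?case by (simp add: mult.assoc)
qed

lemma proj_one: "proj 1 = 1"
  using proj_monom[of 1 0 0 0] by (simp add: monom_simp c_one)

lemma proj_R_FH: "y \<in> R_FH \<Longrightarrow> proj y = y"
  using proj_mult_R_FH[of y 1] by (simp add: proj_one)

lemma proj_in_R_FH: "proj u \<in> R_FH"
  unfolding proj_def lin_ext_def
  by (intro gen_subalg_sum)
    (auto split: prod.split intro!: gen_subalg.mult gen_subalg.scal gen_subalg_power intro: gen_subalg.gen)

lemma E_power_minus_eta_in_ker: "E ^ k - c (\<eta> E ^ k) \<in> eta_ker c E \<eta>"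
proof -
  have "E ^ k + c (- (\<eta> E ^ k)) \<in> R_E"
    by (intro gen_subalg.add gen_subalg_power E_in_R_E gen_subalg.scal)
  moreover have "\<eta> (E ^ k + c (- (\<eta> E ^ k))) = 0"
    by (simp add: eta_add gen_subalg_power E_in_R_E gen_subalg.scal eta_power eta_c)
  ultimately show ?thesis by (simp add: eta_ker_def c_minus)
qed

lemma diff_proj_in_ker_ideal: "u - proj u \<in> ker_ideal"
proof -
  have "u - proj u = (\<Sum>m | coef u m \<noteq> 0. monom (coef u m) m - proj (monom (coef u m) m))"
    by (simp add: sum_subtractf flip: proj_sum) (simp add: sum_monom_coef)
  also have "\<dots> \<in> ker_ideal"
  proof (rule left_mult_span_sum)
    fix m :: "nat \<times> nat \<times> nat"
    obtain i j k where m: "m = (i, j, k)" by (cases m)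
    have "monom z m - proj (monom z m) = (c z * F ^ i * H ^ j) * (E ^ k - c (\<eta> E ^ k))" for z
    proof -
      have "F ^ i * H ^ j * c (\<eta> E ^ k) = c (\<eta> E ^ k) * (F ^ i * H ^ j)"
        by (rule c_commute[symmetric])
      then have "(c z * F ^ i * H ^ j) * c (\<eta> E ^ k) = c (z * \<eta> E ^ k) * F ^ i * H ^ j"
        by (simp add: c_mult mult.assoc)
      then show ?thesis
        unfolding m proj_monom by (simp add: monom_simp right_diff_distrib)
    qed
    then show "monom (coef u m) m - proj (monom (coef u m) m) \<in> ker_ideal"
      by (simp add: left_mult_span.prod E_power_minus_eta_in_ker)
  qed
  finally show ?thesis .
qed

lemma eta_comp_eqI:
  assumes "x \<in> R_FH" and "u - x \<in> ker_ideal"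
  shows "eta_comp c E F H \<eta> u = x"
proof -
  have proj_eq: "proj u = y" if "y \<in> R_FH" and "u - y \<in> ker_ideal" for y
    using proj_add[of y "u - y"] that by (simp add: proj_R_FH proj_ker_ideal)
  show ?thesis
    unfolding eta_comp_def using assms proj_eq by (intro the_equality) auto
qed

lemma eta_comp_eq_proj: "eta_comp c E F H \<eta> u = proj u"
  by (rule eta_comp_eqI[OF proj_in_R_FH diff_proj_in_ker_ideal])

end

theorem mainTheorem16:
  fixes c :: "complex \<Rightarrow> 'a::ring_1" and f :: "complex poly" and E F H :: 'a
    and \<eta> :: "'a \<Rightarrow> complex" and u v :: 'a
  assumes "is_R_algebra c f E F H"
    and "alg_hom_on c (gen_subalg c {E}) \<eta>"
    and "\<eta> E \<noteq> 0"
    and "v \<in> ring_center"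
  shows "eta_comp c E F H \<eta> u * eta_comp c E F H \<eta> v = eta_comp c E F H \<eta> (u * v)"
proof -
  interpret pbw_character c E F H \<eta>
    using assms(1,2) unfolding is_R_algebra_def by unfold_locales auto
  let ?a = "proj u" and ?b = "proj v"
  have central: "w * v = v * w" for w
    using assms(4) by (simp add: ring_center_def)
  have "u * v - ?a * ?b = v * (u - ?a) + ?a * (v - ?b)"
    using central[of u] central[of ?a] by (simp add: algebra_simps)
  also have "\<dots> \<in> left_mult_span (eta_ker c E \<eta>)"
    by (intro left_mult_span.add left_mult_span_mult_left diff_proj_in_ker_ideal)
  finally have "eta_comp c E F H \<eta> (u * v) = ?a * ?b"
    by (intro eta_comp_eqI gen_subalg.mult proj_in_R_FH)
  then show ?thesis
    by (simp add: eta_comp_eq_proj)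
qed

end
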